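(* Let $\vartheta\in(0,1)$, let $c,r$ be positive integers and $\alpha,\beta$ positive integers, and consider the single-agent trust model described in the context. If $\vartheta< c/(c+r)$, then $p_{\rm quit}=\mathbb{P}(\tau<\infty)=1$, i.e. $\tau<\infty$ almost surely.
   Context: Single-agent trust model: $\vartheta$ is the institution's true trustworthiness; $(X_t)_{t\in\mathbb{N}}$ are i.i.d. with $\mathbb{P}(X_t=1)=\vartheta$, $\mathbb{P}(X_t=0)=1-\vartheta$. The agent has actions $A_t\in\{0,1\}$ and observes $X_t$ only in rounds with $A_t=1$. Let $\hat S_t=\sum_{s=1}^t X_s\mathbf{1}_{\{A_s=1\}}$, $\hat F_t=\sum_{s=1}^t(1-X_s)\mathbf{1}_{\{A_s=1\}}$ (so $\hat S_0=\hat F_0=0$), and $\hat\vartheta_t=\frac{\alpha+\hat S_t}{\alpha+\beta+\hat S_t+\hat F_t}$ (the posterior mean under a Beta$(\alpha,\beta)$ prior). The agent acts myopically: $A_t=1$ if $r\hat\vartheta_n-c(1-\hat\vartheta_n)\ge 0$ for all $n\in\{0,1,\dots,t-1\}$, and $A_t=0$ otherwise. The quitting time is $\tau:=\inf\{t\in\mathbb{N}\cup\{\infty\}: r\hat\vartheta_t-c(1-\hat\vartheta_t)<0\}$ and $p_{\rm quit}:=\mathbb{P}(\tau<\infty)$. *)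

theory Defs
  imports "HOL-Probability.Probability"
begin

text \<open>Posterior mean under a Beta(alpha, beta) prior after S successes and F failures.\<close>
definition post_mean :: "real \<Rightarrow> real \<Rightarrow> real \<Rightarrow> real \<Rightarrow> real" where
  "post_mean \<alpha> \<beta> S F = (\<alpha> + S) / (\<alpha> + \<beta> + S + F)"

definition trusts :: "real \<Rightarrow> real \<Rightarrow> real \<Rightarrow> bool" where
  "trusts r c \<theta> \<longleftrightarrow> r * \<theta> - c * (1 - \<theta>) \<ge> 0"

text \<open>History of observed counts along a sample path x (x s = True means X_s = 1):
  hist ... t = [(S_0,F_0), ..., (S_t,F_t)].  In round t+1 the agent acts
  (A_{t+1} = 1) iff the trust condition holds at every n in {0..t}; only then is
  X_{t+1} observed and added to the counts.\<close>
fun hist :: "real \<Rightarrow> real \<Rightarrow> real \<Rightarrow> real \<Rightarrow> (nat \<Rightarrow> bool) \<Rightarrow> nat \<Rightarrow> (real \<times> real) list" where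
  "hist \<alpha> \<beta> r c x 0 = [(0, 0)]"
| "hist \<alpha> \<beta> r c x (Suc t) =
     (let H = hist \<alpha> \<beta> r c x t;
          A = (\<forall>n < length H. trusts r c (post_mean \<alpha> \<beta> (fst (H ! n)) (snd (H ! n))));
          SF = last H
      in H @ [if A then (fst SF + (if x (Suc t) then 1 else 0), snd SF + (if x (Suc t) then 0 else 1))
              else SF])"

definition theta_hat :: "real \<Rightarrow> real \<Rightarrow> real \<Rightarrow> real \<Rightarrow> (nat \<Rightarrow> bool) \<Rightarrow> nat \<Rightarrow> real" where
  "theta_hat \<alpha> \<beta> r c x t =
     (let SF = hist \<alpha> \<beta> r c x t ! t in post_mean \<alpha> \<beta> (fst SF) (snd SF))"

text \<open>Quitting time tau in N \<union> {\<infinity>} (infimum of the empty set is \<infinity>).\<close>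
definition quit_time :: "real \<Rightarrow> real \<Rightarrow> real \<Rightarrow> real \<Rightarrow> (nat \<Rightarrow> bool) \<Rightarrow> enat" where
  "quit_time \<alpha> \<beta> r c x = Inf {enat t | t. \<not> trusts r c (theta_hat \<alpha> \<beta> r c x t)}"

end

theory Submission
  imports Defs "HOL-Real_Asymp.Real_Asymp"
begin

text \<open>
  As long as the agent trusts, it acts in every round and so observes every \<open>X\<^sub>t\<close>; hence
  \<open>\<tau> = \<infinity>\<close> means that the full-sample posterior mean \<open>(\<alpha> + S\<^sub>n) / (\<alpha> + \<beta> + n)\<close>,
  with \<open>S\<^sub>n = X\<^sub>1 + \<dots> + X\<^sub>n\<close>, stays at or above \<open>q = c / (c + r)\<close> for every \<open>n\<close>.
  This forces \<open>S\<^sub>n \<ge> q n - \<alpha>\<close>, an upward deviation of order \<open>(q - \<vartheta>) n\<close> from the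
  mean \<open>\<vartheta> n\<close>, whose probability is at most \<open>exp (-2 ((q - \<vartheta>) n - \<alpha>)\<^sup>2 / n) \<longrightarrow> 0\<close>
  by Hoeffding's inequality.
\<close>

definition successes :: "(nat \<Rightarrow> bool) \<Rightarrow> nat \<Rightarrow> real" where
  "successes x t = (\<Sum>s=1..t. of_bool (x s))"

lemma successes_Suc: "successes x (Suc t) = successes x t + of_bool (x (Suc t))"
  by (simp add: successes_def)

lemma hist_eq_successes:
  assumes "\<forall>n<t. trusts r c (post_mean \<alpha> \<beta> (successes x n) (real n - successes x n))"
  shows "hist \<alpha> \<beta> r c x t = map (\<lambda>n. (successes x n, real n - successes x n)) [0..<Suc t]"
  using assms
proof (induction t)
  case 0
  then show ?case by (simp add: successes_def)
next
  case (Suc t)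
  then have "hist \<alpha> \<beta> r c x t = map (\<lambda>n. (successes x n, real n - successes x n)) [0..<Suc t]"
    by simp
  with Suc.prems show ?case
    by (simp add: Let_def nth_append del: upt_Suc) (simp add: successes_Suc)
qed

lemma theta_hat_eq_successes:
  assumes "\<forall>n<t. trusts r c (post_mean \<alpha> \<beta> (successes x n) (real n - successes x n))"
  shows "theta_hat \<alpha> \<beta> r c x t = post_mean \<alpha> \<beta> (successes x t) (real t - successes x t)"
  using hist_eq_successes[OF assms] by (simp add: theta_hat_def del: upt_Suc)

lemma quit_time_finite_iff:
  "quit_time \<alpha> \<beta> r c x < \<infinity> \<longleftrightarrow> (\<exists>t. \<not> trusts r c (theta_hat \<alpha> \<beta> r c x t))"
proof
  assume "quit_time \<alpha> \<beta> r c x < \<infinity>"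
  then have "{enat t | t. \<not> trusts r c (theta_hat \<alpha> \<beta> r c x t)} \<noteq> {}"
    unfolding quit_time_def by (metis Inf_empty less_irrefl top_enat_def)
  then show "\<exists>t. \<not> trusts r c (theta_hat \<alpha> \<beta> r c x t)"
    by blast
next
  assume "\<exists>t. \<not> trusts r c (theta_hat \<alpha> \<beta> r c x t)"
  then obtain t where "quit_time \<alpha> \<beta> r c x \<le> enat t"
    unfolding quit_time_def by (blast intro: Inf_lower)
  then show "quit_time \<alpha> \<beta> r c x < \<infinity>"
    using enat_ord_simps(4) order_le_less_trans by blast
qed

lemma quit_time_finite_iff_successes:
  "quit_time \<alpha> \<beta> r c x < \<infinity> \<longleftrightarrow>
     (\<exists>t. \<not> trusts r c (post_mean \<alpha> \<beta> (successes x t) (real t - successes x t)))"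
proof -
  have "(\<forall>t. trusts r c (theta_hat \<alpha> \<beta> r c x t)) \<longleftrightarrow>
        (\<forall>t. trusts r c (post_mean \<alpha> \<beta> (successes x t) (real t - successes x t)))"
  proof
    assume all_trust: "\<forall>t. trusts r c (theta_hat \<alpha> \<beta> r c x t)"
    show "\<forall>t. trusts r c (post_mean \<alpha> \<beta> (successes x t) (real t - successes x t))"
    proof
      fix t show "trusts r c (post_mean \<alpha> \<beta> (successes x t) (real t - successes x t))"
        by (induction t rule: less_induct) (metis all_trust theta_hat_eq_successes)
    qed
  qed (simp add: theta_hat_eq_successes)
  then show ?thesis
    unfolding quit_time_finite_iff by blast
qed

lemma trusts_iff_threshold:
  assumes "0 < c + r"
  shows "trusts r c \<theta> \<longleftrightarrow> c / (c + r) \<le> \<theta>"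
  using assms by (simp add: trusts_def field_simps)

lemma quit_time_finite_iff_posterior_below:
  assumes "0 < c + r"
  shows "quit_time \<alpha> \<beta> r c x < \<infinity> \<longleftrightarrow>
    (\<exists>t. (\<alpha> + successes x t) / (\<alpha> + \<beta> + real t) < c / (c + r))"
  unfolding quit_time_finite_iff_successes trusts_iff_threshold[OF assms]
  by (simp add: post_mean_def not_le add.assoc)

lemma (in prob_space) prob_partial_sum_ge:
  fixes Y :: "nat \<Rightarrow> 'a \<Rightarrow> real"
  assumes "indep_vars (\<lambda>_. borel) Y {1..n}"
    and "\<And>i. i \<in> {1..n} \<Longrightarrow> AE \<omega> in M. Y i \<omega> \<in> {0..1}"
    and mean: "\<And>i. i \<in> {1..n} \<Longrightarrow> expectation (Y i) = p"
    and "n \<ge> 1" and "\<epsilon> \<ge> 0"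
  shows "prob {\<omega> \<in> space M. real n * p + \<epsilon> \<le> (\<Sum>i=1..n. Y i \<omega>)} \<le> exp (-2 * \<epsilon>\<^sup>2 / real n)"
proof -
  interpret Hoeffding_ineq M "{1..n}" Y "\<lambda>_. 0" "\<lambda>_. 1" "\<Sum>i=1..n. expectation (Y i)"
    by unfold_locales (use assms in auto)
  show ?thesis
    using Hoeffding_ineq_ge[OF \<open>\<epsilon> \<ge> 0\<close>] \<open>n \<ge> 1\<close> by (simp add: mean)
qed

lemma (in prob_space) AE_partial_sum_below_line:
  fixes Y :: "nat \<Rightarrow> 'a \<Rightarrow> real"
  assumes indep: "indep_vars (\<lambda>_. borel) Y {1..}"
    and bounded: "\<And>i. i \<ge> 1 \<Longrightarrow> AE \<omega> in M. Y i \<omega> \<in> {0..1}"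
    and mean: "\<And>i. i \<ge> 1 \<Longrightarrow> expectation (Y i) = p"
    and "p < q"
  shows "AE \<omega> in M. \<exists>n. (\<Sum>i=1..n. Y i \<omega>) < q * real n - a"
proof -
  define N where "N = {\<omega> \<in> space M. \<forall>n. q * real n - a \<le> (\<Sum>i=1..n. Y i \<omega>)}"
  have [measurable]: "Y i \<in> borel_measurable M" if "i \<ge> 1" for i
    using indep that unfolding indep_vars_def by auto
  have "N \<in> events"
    unfolding N_def by measurable
  have tail_bound: "prob N \<le> exp (-2 * ((q - p) * real n - a)\<^sup>2 / real n)"
    if "n \<ge> 1" and "a \<le> (q - p) * real n" for n
  proof -
    have "N \<subseteq> {\<omega> \<in> space M. real n * p + ((q - p) * real n - a) \<le> (\<Sum>i=1..n. Y i \<omega>)}"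
      unfolding N_def by (auto simp: algebra_simps)
    then have "prob N \<le> prob {\<omega> \<in> space M. real n * p + ((q - p) * real n - a) \<le> (\<Sum>i=1..n. Y i \<omega>)}"
      by (intro finite_measure_mono) measurable
    also have "\<dots> \<le> exp (-2 * ((q - p) * real n - a)\<^sup>2 / real n)"
      using indep bounded mean that
      by (intro prob_partial_sum_ge) (auto elim: indep_vars_subset)
    finally show ?thesis .
  qed
  have "(\<lambda>n. exp (-2 * ((q - p) * real n - a)\<^sup>2 / real n)) \<longlonglongrightarrow> 0"
    using \<open>p < q\<close> by real_asymp
  moreover have "eventually (\<lambda>n. prob N \<le> exp (-2 * ((q - p) * real n - a)\<^sup>2 / real n)) sequentially"
  proof -
    have "eventually (\<lambda>n. a \<le> (q - p) * real n) sequentially"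
      using \<open>p < q\<close> by real_asymp
    then show ?thesis
      using eventually_ge_at_top[of 1] by eventually_elim (rule tail_bound)
  qed
  ultimately have "prob N \<le> 0"
    by (rule tendsto_lowerbound) simp
  then have "N \<in> null_sets M"
    using \<open>N \<in> events\<close> by (simp add: emeasure_eq_measure measure_le_0_iff null_setsI)
  then show ?thesis
    by (rule AE_I') (auto simp: N_def not_less)
qed


lemma (in prob_space) expectation_of_bool:
  "expectation (\<lambda>\<omega>. of_bool (P \<omega>)) = prob {\<omega> \<in> space M. P \<omega>}"
proof -
  have "expectation (\<lambda>\<omega>. of_bool (P \<omega>)) = expectation (indicator {\<omega>. P \<omega>})"
    by (simp add: indicator_def[abs_def])
  also have "\<dots> = prob ({\<omega>. P \<omega>} \<inter> space M)"
    by (rule Bochner_Integration.integral_indicator)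
  also have "{\<omega>. P \<omega>} \<inter> space M = {\<omega> \<in> space M. P \<omega>}"
    by blast
  finally show ?thesis .
qed

lemma (in prob_space) AE_posterior_mean_eventually_below:
  fixes X :: "nat \<Rightarrow> 'a \<Rightarrow> bool"
  assumes indep: "indep_vars (\<lambda>_. count_space UNIV) X {1..}"
    and success_prob: "\<And>t. t \<ge> 1 \<Longrightarrow> prob {\<omega> \<in> space M. X t \<omega>} = p"
    and "p < q" and "0 \<le> a" and "0 \<le> b"
  shows "AE \<omega> in M. \<exists>t. (a + successes (\<lambda>t. X t \<omega>) t) / (a + b + real t) < q"
proof -
  have "indep_vars (\<lambda>_. borel) (\<lambda>t \<omega>. of_bool (X t \<omega>)) {1..}"
    using indep by (rule indep_vars_compose2) simp
  then have "AE \<omega> in M. \<exists>n. successes (\<lambda>t. X t \<omega>) n < q * real n - a"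
    unfolding successes_def using success_prob \<open>p < q\<close>
    by (intro AE_partial_sum_below_line) (auto simp: expectation_of_bool)
  then show ?thesis
  proof eventually_elim
    case (elim \<omega>)
    then obtain n where below: "a + successes (\<lambda>t. X t \<omega>) n < q * real n"
      by (auto simp: algebra_simps)
    have "0 \<le> successes (\<lambda>t. X t \<omega>) n"
      by (simp add: successes_def sum_nonneg)
    with below \<open>0 \<le> a\<close> have "0 < q * real n"
      by linarith
    then have "0 < q" and "0 < real n"
      by (auto simp: zero_less_mult_iff)
    then have "q * real n \<le> q * (a + b + real n)"
      using \<open>0 \<le> a\<close> \<open>0 \<le> b\<close> by (intro mult_left_mono) simp_all
    with below have "a + successes (\<lambda>t. X t \<omega>) n < q * (a + b + real n)"
      by linarith
    with \<open>0 \<le> a\<close> \<open>0 \<le> b\<close> \<open>0 < real n\<close> show ?case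
      by (auto simp: divide_less_eq)
  qed
qed

theorem lemma3p1:
  fixes M :: "'a measure" and X :: "nat \<Rightarrow> 'a \<Rightarrow> bool"
    and p :: real and c r \<alpha> \<beta> :: nat
  assumes "prob_space M"
    and "\<And>t. t \<ge> 1 \<Longrightarrow> X t \<in> measurable M (count_space UNIV)"
    and "prob_space.indep_vars M (\<lambda>_. count_space UNIV) X {1..}"
    and "\<And>t. t \<ge> 1 \<Longrightarrow> measure M {\<omega> \<in> space M. X t \<omega>} = p"
    and "0 < p" and "p < 1"
    and "0 < c" and "0 < r" and "0 < \<alpha>" and "0 < \<beta>"
    and "p < real c / (real c + real r)"
  shows "measure M {\<omega> \<in> space M.
           quit_time (real \<alpha>) (real \<beta>) (real r) (real c) (\<lambda>t. X t \<omega>) < \<infinity>} = 1"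
proof -
  interpret prob_space M by fact
  have [measurable]: "(\<lambda>\<omega>. successes (\<lambda>t. X t \<omega>) t) \<in> borel_measurable M" for t
    unfolding successes_def using assms(2) by (intro borel_measurable_sum) simp
  have weights_pos: "0 < real c + real r"
    using \<open>0 < c\<close> by simp
  have "AE \<omega> in M. \<exists>t. (real \<alpha> + successes (\<lambda>t. X t \<omega>) t) / (real \<alpha> + real \<beta> + real t)
      < real c / (real c + real r)"
    using assms(3,4,11) by (rule AE_posterior_mean_eventually_below) simp_all
  then show ?thesis
    unfolding quit_time_finite_iff_posterior_below[OF weights_pos] by (subst prob_Collect_eq_1) measurable
qed

end
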